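(* Let $d\ge2$, $\varepsilon\in(0,1)$, $c\in\{1,2,\dots\}\cup\{\infty\}$. With the boundary cells $p_1,\dots,p_k$, the vectors $R_j$ and the map $f$ defined below, the $(d-1)\times k$ matrix $R=[R_1,\dots,R_k]$ is weakly completely-$\mathcal S$ with respect to $f$.
   Context: SBBS: fix $\varepsilon\in[0,1]$, capacity $c\in\{1,2,\dots\}\cup\{\infty\}$. A configuration is $\zeta\in\{0,1\}^{\mathbb N}$ with finitely many $1$'s (balls). Given $\zeta$, the carrier $\Gamma$ has $\Gamma(0)=0$ and recursively (fresh independent randomness at each $k$): $\Gamma(k)=\Gamma(k-1)+1$ with probability $1-\varepsilon$ (else unchanged) if $\zeta(k)=1$ and $\Gamma(k-1)<c$; $\Gamma(k)=\Gamma(k-1)-1$ if $\zeta(k)=0$ and $\Gamma(k-1)\ge1$; $\Gamma(k)=\Gamma(k-1)$ otherwise. The new configuration is $\zeta'(k)=\mathbf 1(\Gamma(k)-\Gamma(k-1)=-1)+\mathbf 1(\Gamma(k)=\Gamma(k-1),\zeta(k)=1)$; iterating independently gives the SBBS. With $d$ balls at positions $\zeta^{(1)}_t<\dots<\zeta^{(d)}_t$, the gap process is $W_t\in\mathbb Z^{d-1}_{\ge0}$, $W^i_t=\zeta^{(i+1)}_t-\zeta^{(i)}_t-1$, a time-homogeneous Markov chain. Boundary cells: $\partial\mathbb Z^{d-1}_{\ge1}=\mathbb Z^{d-1}_{\ge0}\setminus\mathbb Z^{d-1}_{\ge1}$. $\{p_1,\dots,p_k\}$ is the (finite) partition of $\partial\mathbb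 Z^{d-1}_{\ge1}$ into equivalence classes of the relation "the conditional laws of $W_1-W_0$ given $W_0=x$ and given $W_0=y$ coincide" for the SBBS with capacity $\infty$ and some fixed error probability in $(0,1)$. For every $\varepsilon\in(0,1)$ and every $c$ the transition kernel of $W$ is constant on each cell, and each cell has the form $p_j=\{y\in\partial\mathbb Z^{d-1}_{\ge1}: y_i=x^j_i\ (i\in I^j),\ y_i\ge x^j_i\ (i\notin I^j)\}$ for some $x^j\in\partial\mathbb Z^{d-1}_{\ge1}$ and nonempty $I^j\subseteq\{1,\dots,d-1\}$ with $x^j_i=1$ for $i<\min I^j$ and $x^j_{\min I^j}=0$. The cells are indexed so that for $j\le d-1$, $p_j=\{y: y_j=0,\ y_{j+1}\ge2,\ y_i\ge1\ (i\notin\{j,j+1\})\}$. Define $R_j=\mathbb E[W_1-W_0\mid W_0=x]$ for any $x\in p_j$ (for the SBBS with the given $\varepsilon,c$), and $f(j)=I^j=\{i:\sup_{y\in p_j}y_i<\infty\}$. Weakly completely-$\mathcal S$: for an $m\times k$ matrix $R$ and $f:\{1,\dots,k\}\to\mathcal P(\{1,\dots,m\})$, for nonempty $I\subseteq\{1,\dots,m\}$ set $J_I=\{j: f(j)\subseteq I\}$ and $R_I=R_{I,J_I}$; $R$ is weakly completely-$\mathcal S$ w.r.t. $f$ if for every nonempty $I$ there is $\lambda_I\in\mathbb R^I_{>0}$ with $(\lambda_I^\top R_I)_j\ge1$ for all $j\in J_I$. *)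

theory Defs
  imports "HOL-Probability.Probability"
begin

text \<open>Sites are 1,2,3,...; a configuration is a predicate zeta on nat (site 0 unused).
  The coin u k = True means "the carrier picks up the ball at site k" (probability 1 - eps);
  the coin is only used when zeta k holds and the carrier load is below the capacity c.\<close>

fun carrier :: "enat \<Rightarrow> (nat \<Rightarrow> bool) \<Rightarrow> (nat \<Rightarrow> bool) \<Rightarrow> nat \<Rightarrow> nat" where
  "carrier c zeta u 0 = 0"
| "carrier c zeta u (Suc k) =
     (let g = carrier c zeta u k in
      if zeta (Suc k) \<and> enat g < c then (if u (Suc k) then g + 1 else g)
      else if \<not> zeta (Suc k) \<and> g \<ge> 1 then g - 1
      else g)"

definition sbbs_step :: "enat \<Rightarrow> (nat \<Rightarrow> bool) \<Rightarrow> (nat \<Rightarrow> bool) \<Rightarrow> nat \<Rightarrow> bool" where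
  "sbbs_step c zeta u k =
     (k \<noteq> 0 \<and>
      (carrier c zeta u k + 1 = carrier c zeta u (k - 1) \<or>
       (carrier c zeta u k = carrier c zeta u (k - 1) \<and> zeta k)))"

text \<open>Gap vectors in Z^{d-1}_{>=0} are functions nat => nat supported on {1..d-1}.\<close>
definition gap_space :: "nat \<Rightarrow> (nat \<Rightarrow> nat) set" where
  "gap_space d = {x. \<forall>i. i \<notin> {1..d-1} \<longrightarrow> x i = 0}"

definition boundary :: "nat \<Rightarrow> (nat \<Rightarrow> nat) set" where
  "boundary d = {x \<in> gap_space d. \<exists>i\<in>{1..d-1}. x i = 0}"

fun ball_pos :: "(nat \<Rightarrow> nat) \<Rightarrow> nat \<Rightarrow> nat" where
  "ball_pos x 0 = 0"
| "ball_pos x (Suc i) = (if i = 0 then 1 else ball_pos x i + x i + 1)"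

definition config_of_gaps :: "nat \<Rightarrow> (nat \<Rightarrow> nat) \<Rightarrow> nat \<Rightarrow> bool" where
  "config_of_gaps d x k = (\<exists>i\<in>{1..d}. k = ball_pos x i)"

definition gaps_of_config :: "nat \<Rightarrow> (nat \<Rightarrow> bool) \<Rightarrow> nat \<Rightarrow> nat" where
  "gaps_of_config d zeta i =
     (let s = sorted_list_of_set {k. zeta k} in
      if i \<in> {1..d-1} then s ! i - s ! (i - 1) - 1 else 0)"

text \<open>Independent coins at all sites 1..(position of last ball); sites further right carry no
  ball and their coins are irrelevant.\<close>
definition coins :: "real \<Rightarrow> nat \<Rightarrow> (nat \<Rightarrow> nat) \<Rightarrow> (nat \<Rightarrow> bool) pmf" where
  "coins eps d x = Pi_pmf {1..ball_pos x d} False (\<lambda>_. bernoulli_pmf (1 - eps))"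

definition increment_law :: "real \<Rightarrow> enat \<Rightarrow> nat \<Rightarrow> (nat \<Rightarrow> nat) \<Rightarrow> (nat \<Rightarrow> int) pmf" where
  "increment_law eps c d x =
     map_pmf (\<lambda>u i. int (gaps_of_config d (sbbs_step c (config_of_gaps d x) u) i) - int (x i))
             (coins eps d x)"

definition drift :: "real \<Rightarrow> enat \<Rightarrow> nat \<Rightarrow> (nat \<Rightarrow> nat) \<Rightarrow> nat \<Rightarrow> real" where
  "drift eps c d x i = measure_pmf.expectation (increment_law eps c d x) (\<lambda>v. real_of_int (v i))"

definition cells :: "real \<Rightarrow> nat \<Rightarrow> (nat \<Rightarrow> nat) set set" where
  "cells eps0 d = boundary d //
     {(x, y). x \<in> boundary d \<and> y \<in> boundary d \<and>
              increment_law eps0 \<infinity> d x = increment_law eps0 \<infinity> d y}"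

text \<open>R_j: drift at (any, here a chosen) point of the cell p.\<close>
definition cell_drift :: "real \<Rightarrow> enat \<Rightarrow> nat \<Rightarrow> (nat \<Rightarrow> nat) set \<Rightarrow> nat \<Rightarrow> real" where
  "cell_drift eps c d p = drift eps c d (SOME x. x \<in> p)"

definition cell_f :: "nat \<Rightarrow> (nat \<Rightarrow> nat) set \<Rightarrow> nat set" where
  "cell_f d p = {i \<in> {1..d-1}. bdd_above ((\<lambda>y. y i) ` p)}"

text \<open>Matrix R with rows 1..m and columns indexed by the set J (the paper uses J = {1..k});
  R i j is the (i,j) entry. R_I = R_{I,J_I} with J_I = {j. f j \<subseteq> I}.\<close>
definition weakly_completely_S ::
    "nat \<Rightarrow> 'j set \<Rightarrow> (nat \<Rightarrow> 'j \<Rightarrow> real) \<Rightarrow> ('j \<Rightarrow> nat set) \<Rightarrow> bool" where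
  "weakly_completely_S m J R f \<longleftrightarrow>
     (\<forall>I. I \<subseteq> {1..m} \<and> I \<noteq> {} \<longrightarrow>
        (\<exists>lam :: nat \<Rightarrow> real. (\<forall>i\<in>I. lam i > 0) \<and>
           (\<forall>j\<in>J. f j \<subseteq> I \<longrightarrow> (\<Sum>i\<in>I. lam i * R i j) \<ge> 1)))"

end

theory Submission
  imports Defs
begin

text \<open>Let \<open>m\<close> be the first zero gap of a boundary point \<open>x\<close>. A positive gap shrinks with
  positive probability (pick up only the ball on its left), a zero gap never does; so the law of
  \<open>W\<^sub>1 - W\<^sub>0\<close> determines \<open>m\<close>, which is therefore constant on the cell of \<open>x\<close> and belongs to
  \<open>f\<close> of that cell. In the drift, coordinate \<open>m\<close> is at least \<open>eps ^ m * (1 - eps)\<close> (the first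
  \<open>m\<close> balls stay and ball \<open>m + 1\<close> is carried), the coordinates before \<open>m\<close> are nonnegative
  (those balls are isolated, so each carried ball moves one site and the two pickup
  probabilities cancel), and every coordinate is at least \<open>-2d\<close>, since no ball moves further
  than \<open>2d\<close> sites. Weights \<open>\<lambda>\<^sub>i = C t\<^sup>i\<close> with \<open>t\<close> small then let coordinate \<open>m\<close>
  dominate in every column.\<close>

section \<open>The carrier\<close>

lemma carrier_Suc_ball_le:
  "zeta (Suc s) \<Longrightarrow> carrier c zeta u (Suc s) \<le> carrier c zeta u s + 1"
  by (auto simp: Let_def)

lemma carrier_Suc_ball_no_pickup:
  "zeta (Suc s) \<Longrightarrow> \<not> u (Suc s) \<Longrightarrow> carrier c zeta u (Suc s) = carrier c zeta u s"
  by (auto simp: Let_def)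

lemma carrier_Suc_ball_pickup_from_empty:
  "zeta (Suc s) \<Longrightarrow> u (Suc s) \<Longrightarrow> carrier c zeta u s = 0 \<Longrightarrow> c \<noteq> 0 \<Longrightarrow>
    carrier c zeta u (Suc s) = 1"
  by (auto simp: Let_def zero_enat_def[symmetric] gr_zeroI)

lemma carrier_Suc_empty:
  "\<not> zeta (Suc s) \<Longrightarrow> carrier c zeta u (Suc s) = carrier c zeta u s - 1"
  by (auto simp: Let_def)

lemma carrier_stays_zero:
  assumes "carrier c zeta u a = 0" and "\<And>t. a < t \<Longrightarrow> t \<le> b \<Longrightarrow> zeta t \<Longrightarrow> \<not> u t"
    and "a \<le> t" "t \<le> b"
  shows "carrier c zeta u t = 0"
  using assms(3,4)
proof (induction t rule: dec_induct)
  case (step t)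
  then show ?case
    using assms carrier_Suc_ball_no_pickup[of zeta t u c] carrier_Suc_empty[of zeta t c u]
    by (cases "zeta (Suc t)") auto
qed (use assms(1) in simp)

lemma carrier_isolated_balls:
  assumes "c \<noteq> 0" "\<not> zeta 0" and "\<And>t. Suc t \<le> b \<Longrightarrow> zeta (Suc t) \<Longrightarrow> \<not> zeta t"
    and "t \<le> b"
  shows "carrier c zeta u t = (if zeta t \<and> u t then 1 else 0)"
  using assms(4)
proof (induction t)
  case (Suc t)
  then have IH: "carrier c zeta u t = (if zeta t \<and> u t then 1 else 0)" by simp
  show ?case
  proof (cases "zeta (Suc t)")
    case True
    then have "carrier c zeta u t = 0" using IH assms(3) Suc.prems by simp
    then show ?thesis
      using True carrier_Suc_ball_no_pickup[of zeta t u c]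
        carrier_Suc_ball_pickup_from_empty[of zeta t u c] assms(1)
      by (cases "u (Suc t)") auto
  next
    case False
    then show ?thesis using IH carrier_Suc_empty[of zeta t c u] by auto
  qed
qed (use assms(2) in simp)

definition count_upto :: "(nat \<Rightarrow> bool) \<Rightarrow> nat \<Rightarrow> nat" where
  "count_upto P s = card {t. t \<le> s \<and> P t}"

lemma count_upto_Suc: "count_upto P (Suc s) = count_upto P s + (if P (Suc s) then 1 else 0)"
proof -
  have "{t. t \<le> Suc s \<and> P t} = {t. t \<le> s \<and> P t} \<union> (if P (Suc s) then {Suc s} else {})"
    by (auto simp: le_Suc_eq)
  then show ?thesis unfolding count_upto_def by (auto simp: card_insert_if)
qed

lemma count_upto_0: "\<not> P 0 \<Longrightarrow> count_upto P 0 = 0"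
  unfolding count_upto_def by (metis (mono_tags) card.empty empty_Collect_eq le_zero_eq)

lemma count_upto_mono: "s \<le> s' \<Longrightarrow> count_upto P s \<le> count_upto P s'"
  unfolding count_upto_def by (rule card_mono) auto

lemma count_upto_sbbs_step:
  assumes "\<not> zeta 0"
  shows "count_upto (sbbs_step c zeta u) s + carrier c zeta u s = count_upto zeta s"
proof (induction s)
  case 0
  then show ?case using assms by (simp add: count_upto_0 sbbs_step_def)
next
  case (Suc s)
  have "carrier c zeta u (Suc s) + (if sbbs_step c zeta u (Suc s) then 1 else 0)
        = carrier c zeta u s + (if zeta (Suc s) then 1 else 0)"
    by (auto simp: Let_def sbbs_step_def)
  then show ?case using Suc by (simp add: count_upto_Suc)
qed

text \<open>While fewer than \<open>k \<le> count_upto zeta a\<close> new balls have appeared, the carrier is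
  loaded, so every empty site lowers it by one and every ball raises it by at most one.\<close>
lemma carrier_drains:
  assumes "\<not> zeta 0" "k \<le> count_upto zeta a" "count_upto (sbbs_step c zeta u) (a + j) < k"
  shows "carrier c zeta u (a + j) + j + 2 * count_upto zeta a
           \<le> carrier c zeta u a + 2 * count_upto zeta (a + j)"
  using assms(3)
proof (induction j)
  case (Suc j)
  let ?G = "carrier c zeta u" and ?N = "count_upto zeta" and ?N' = "count_upto (sbbs_step c zeta u)"
  have "?N' (a + j) < k"
    using Suc.prems count_upto_mono[of "a + j" "Suc (a + j)" "sbbs_step c zeta u"] by simp
  then have IH: "?G (a + j) + j + 2 * ?N a \<le> ?G a + 2 * ?N (a + j)"
    and loaded: "1 \<le> ?G (a + j)"
    using Suc.IH count_upto_sbbs_step[of zeta c u "a + j", OF assms(1)] assms(2)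
      count_upto_mono[of a "a + j" zeta] by auto
  show ?case
    using IH loaded carrier_Suc_ball_le[of zeta "a + j" c u] carrier_Suc_empty[of zeta "a + j" c u]
    by (cases "zeta (Suc (a + j))") (auto simp: count_upto_Suc)
qed simp

lemma count_upto_sbbs_step_catches_up:
  assumes "\<not> zeta 0" "k \<le> count_upto zeta a" "2 * count_upto zeta (a + j) < j + count_upto zeta a"
  shows "k \<le> count_upto (sbbs_step c zeta u) (a + j)"
proof (rule ccontr)
  assume "\<not> ?thesis"
  then show False
    using carrier_drains[OF assms(1,2), of c u j] count_upto_sbbs_step[of zeta c u a, OF assms(1)]
      assms(3) by linarith
qed

section \<open>The canonical configuration of a gap vector\<close>

lemma ball_pos_ge: "1 \<le> i \<Longrightarrow> i \<le> ball_pos x i"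
  by (induction i) (auto simp: le_Suc_eq)

lemma ball_pos_strict_mono: "1 \<le> i \<Longrightarrow> i < j \<Longrightarrow> ball_pos x i < ball_pos x j"
  by (induction j) (auto simp: less_Suc_eq)

lemma ball_pos_less_iff: "1 \<le> i \<Longrightarrow> 1 \<le> j \<Longrightarrow> ball_pos x i < ball_pos x j \<longleftrightarrow> i < j"
  by (metis ball_pos_strict_mono linorder_neqE_nat order_less_asym)

lemma ball_pos_le_iff: "1 \<le> i \<Longrightarrow> 1 \<le> j \<Longrightarrow> ball_pos x i \<le> ball_pos x j \<longleftrightarrow> i \<le> j"
  by (meson ball_pos_less_iff not_le)

lemma ball_pos_eq_iff: "1 \<le> i \<Longrightarrow> 1 \<le> j \<Longrightarrow> ball_pos x i = ball_pos x j \<longleftrightarrow> i = j"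
  by (metis ball_pos_less_iff nat_neq_iff)

lemma not_config_of_gaps_0: "\<not> config_of_gaps d x 0"
  unfolding config_of_gaps_def using ball_pos_ge by (metis atLeastAtMost_iff le_zero_eq not_one_le_zero)

lemma config_of_gaps_ball_pos: "k \<in> {1..d} \<Longrightarrow> config_of_gaps d x (ball_pos x k)"
  unfolding config_of_gaps_def by auto

lemma not_config_of_gaps_between:
  assumes "1 \<le> i" "ball_pos x i < t" "t < ball_pos x (Suc i)"
  shows "\<not> config_of_gaps d x t"
proof
  assume "config_of_gaps d x t"
  then obtain j where "j \<in> {1..d}" "t = ball_pos x j" by (auto simp: config_of_gaps_def)
  then show False using assms ball_pos_less_iff[of i j x] ball_pos_less_iff[of j "Suc i" x] by auto
qed

lemma count_upto_config_of_gaps: "count_upto (config_of_gaps d x) b = card {i\<in>{1..d}. ball_pos x i \<le> b}"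
proof -
  have "{t. t \<le> b \<and> config_of_gaps d x t} = ball_pos x ` {i\<in>{1..d}. ball_pos x i \<le> b}"
    by (auto simp: config_of_gaps_def)
  moreover have "inj_on (ball_pos x) {i\<in>{1..d}. ball_pos x i \<le> b}"
    by (auto simp: inj_on_def ball_pos_eq_iff)
  ultimately show ?thesis unfolding count_upto_def by (simp add: card_image)
qed

lemma count_upto_config_of_gaps_le: "count_upto (config_of_gaps d x) b \<le> d"
proof -
  have "card {i\<in>{1..d}. ball_pos x i \<le> b} \<le> card {1..d}" by (intro card_mono) auto
  then show ?thesis by (simp add: count_upto_config_of_gaps)
qed

lemma count_upto_config_of_gaps_eqI:
  assumes "k \<le> d" "\<And>i. 1 \<le> i \<Longrightarrow> i \<le> d \<Longrightarrow> ball_pos x i \<le> b \<longleftrightarrow> i \<le> k"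
  shows "count_upto (config_of_gaps d x) b = k"
proof -
  have "{i\<in>{1..d}. ball_pos x i \<le> b} = {1..k}" using assms by auto
  then show ?thesis by (simp add: count_upto_config_of_gaps)
qed

lemma count_upto_config_of_gaps_ball_pos:
  "k \<in> {1..d} \<Longrightarrow> count_upto (config_of_gaps d x) (ball_pos x k) = k"
  by (rule count_upto_config_of_gaps_eqI) (auto simp: ball_pos_le_iff)

lemma count_upto_config_of_gaps_before_ball_pos:
  assumes "k \<in> {1..d}"
  shows "count_upto (config_of_gaps d x) (ball_pos x k - 1) = k - 1"
proof (rule count_upto_config_of_gaps_eqI)
  fix i assume "1 \<le> i" "i \<le> d"
  then show "ball_pos x i \<le> ball_pos x k - 1 \<longleftrightarrow> i \<le> k - 1"
    using assms ball_pos_less_iff[of i k x] ball_pos_ge[of k x] by auto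
qed (use assms in auto)

lemma count_upto_config_of_gaps_after_ball_pos:
  assumes "i \<in> {1..<d}" "1 \<le> x i"
  shows "count_upto (config_of_gaps d x) (ball_pos x i + 1) = i"
proof (rule count_upto_config_of_gaps_eqI)
  fix j assume "1 \<le> j" "j \<le> d"
  have "ball_pos x i + 1 < ball_pos x (Suc i)" using assms by simp
  then show "ball_pos x j \<le> ball_pos x i + 1 \<longleftrightarrow> j \<le> i"
    using ball_pos_less_iff[of j "Suc i" x] ball_pos_le_iff[of j i x] \<open>1 \<le> j\<close> assms by auto
qed (use assms in auto)

lemma sorted_list_of_set_nth_le_iff:
  fixes S :: "'a::linorder set"
  assumes "finite S" "j < card S"
  shows "sorted_list_of_set S ! j \<le> b \<longleftrightarrow> j < card {y\<in>S. y \<le> b}"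
proof -
  let ?xs = "sorted_list_of_set S"
  have sorted: "sorted_wrt (<) ?xs" and dist: "distinct ?xs" and set: "set ?xs = S"
    and len: "length ?xs = card S" using assms(1) by simp_all
  have below: "{y\<in>S. y < ?xs ! j} = set (take j ?xs)"
  proof safe
    fix y assume "y \<in> S" "y < ?xs ! j"
    then obtain i where "i < length ?xs" "y = ?xs ! i" using set by (metis in_set_conv_nth)
    moreover have "\<not> j \<le> i" if "i < length ?xs" "y = ?xs ! i"
      using that \<open>y < ?xs ! j\<close> sorted_nth_mono[OF sorted_sorted_list_of_set[of S], of j i] by auto
    ultimately show "y \<in> set (take j ?xs)" by (auto simp: in_set_conv_nth)
  next
    fix y assume "y \<in> set (take j ?xs)"
    then obtain i where "i < j" "y = ?xs ! i" using assms len by (auto simp: in_set_conv_nth)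
    then show "y \<in> S" "y < ?xs ! j"
      using assms len set sorted_wrt_nth_less[OF sorted] nth_mem[of i ?xs] by auto
  qed
  have card_below: "card {y\<in>S. y < ?xs ! j} = j"
    unfolding below using dist assms len by (simp add: distinct_card)
  have jS: "?xs ! j \<in> S" using assms len set nth_mem by metis
  show ?thesis
  proof
    assume "?xs ! j \<le> b"
    then have "insert (?xs ! j) {y\<in>S. y < ?xs ! j} \<subseteq> {y\<in>S. y \<le> b}" using jS by auto
    then have "card (insert (?xs ! j) {y\<in>S. y < ?xs ! j}) \<le> card {y\<in>S. y \<le> b}"
      using assms(1) by (intro card_mono) auto
    then show "j < card {y\<in>S. y \<le> b}" using card_below assms(1) by simp
  next
    assume "j < card {y\<in>S. y \<le> b}"
    show "?xs ! j \<le> b"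
    proof (rule ccontr)
      assume "\<not> ?xs ! j \<le> b"
      then have "card {y\<in>S. y \<le> b} \<le> card {y\<in>S. y < ?xs ! j}"
        using assms(1) by (intro card_mono) auto
      then show False using card_below \<open>j < card {y\<in>S. y \<le> b}\<close> by simp
    qed
  qed
qed

section \<open>Ball positions after one step\<close>

lemma Collect_eq_if_count_upto_saturated:
  assumes "count_upto P T = n" "\<And>s. count_upto P s \<le> n"
  shows "{t. P t} = {t. t \<le> T \<and> P t}"
proof safe
  fix t assume "P t"
  show "t \<le> T"
  proof (rule ccontr)
    assume "\<not> t \<le> T"
    then have "card (insert t {s. s \<le> T \<and> P s}) \<le> count_upto P t"
      unfolding count_upto_def using \<open>P t\<close> by (intro card_mono) auto
    moreover have "card (insert t {s. s \<le> T \<and> P s}) = n + 1"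
      using assms(1) \<open>\<not> t \<le> T\<close> unfolding count_upto_def by simp
    ultimately show False using assms(2)[of t] by simp
  qed
qed

definition new_ball_pos :: "enat \<Rightarrow> nat \<Rightarrow> (nat \<Rightarrow> nat) \<Rightarrow> (nat \<Rightarrow> bool) \<Rightarrow> nat \<Rightarrow> nat" where
  "new_ball_pos c d x u k = sorted_list_of_set {t. sbbs_step c (config_of_gaps d x) u t} ! (k - 1)"

lemma count_upto_sbbs_step_config_of_gaps:
  "count_upto (sbbs_step c (config_of_gaps d x) u) s + carrier c (config_of_gaps d x) u s
     = count_upto (config_of_gaps d x) s"
  using count_upto_sbbs_step[of "config_of_gaps d x"] not_config_of_gaps_0 by blast

lemma count_upto_sbbs_step_after_ball_pos:
  assumes "k \<in> {1..d}"
  shows "k \<le> count_upto (sbbs_step c (config_of_gaps d x) u) (ball_pos x k + 2 * d)"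
  using assms count_upto_config_of_gaps_ball_pos[OF assms, of x]
    count_upto_config_of_gaps_le[of d x "ball_pos x k + 2 * d"]
  by (intro count_upto_sbbs_step_catches_up) (auto simp: not_config_of_gaps_0)

lemma sbbs_step_config_of_gaps_finite_card:
  assumes "1 \<le> d"
  shows "finite {t. sbbs_step c (config_of_gaps d x) u t}"
    and "card {t. sbbs_step c (config_of_gaps d x) u t} = d"
proof -
  let ?new = "sbbs_step c (config_of_gaps d x) u" and ?T = "ball_pos x d + 2 * d"
  have bounded: "count_upto ?new s \<le> d" for s
    using count_upto_sbbs_step_config_of_gaps[of c d x u s] count_upto_config_of_gaps_le[of d x s]
    by linarith
  then have saturated: "count_upto ?new ?T = d"
    using count_upto_sbbs_step_after_ball_pos[of d d] assms by (simp add: le_antisym)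
  have "{t. ?new t} = {t. t \<le> ?T \<and> ?new t}"
    using Collect_eq_if_count_upto_saturated[OF saturated bounded] .
  then show "finite {t. ?new t}" "card {t. ?new t} = d"
    using saturated by (simp_all add: count_upto_def)
qed

lemma new_ball_pos_le_iff_count:
  assumes "k \<in> {1..d}"
  shows "new_ball_pos c d x u k \<le> b \<longleftrightarrow> k \<le> count_upto (sbbs_step c (config_of_gaps d x) u) b"
proof -
  let ?new = "sbbs_step c (config_of_gaps d x) u"
  have "finite {t. ?new t}" "k - 1 < card {t. ?new t}"
    using assms sbbs_step_config_of_gaps_finite_card[of d c x u] by auto
  then have "new_ball_pos c d x u k \<le> b \<longleftrightarrow> k - 1 < card {y \<in> {t. ?new t}. y \<le> b}"
    unfolding new_ball_pos_def by (rule sorted_list_of_set_nth_le_iff)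
  also have "{y \<in> {t. ?new t}. y \<le> b} = {t. t \<le> b \<and> ?new t}" by blast
  finally show ?thesis using assms unfolding count_upto_def by auto
qed

lemma new_ball_pos_le_iff:
  assumes "k \<in> {1..d}"
  shows "new_ball_pos c d x u k \<le> b
           \<longleftrightarrow> k + carrier c (config_of_gaps d x) u b \<le> count_upto (config_of_gaps d x) b"
  using new_ball_pos_le_iff_count[OF assms, of c x u b] count_upto_sbbs_step_config_of_gaps[of c d x u b]
  by linarith

lemma ball_pos_le_new_ball_pos:
  assumes "k \<in> {1..d}"
  shows "ball_pos x k \<le> new_ball_pos c d x u k"
  using new_ball_pos_le_iff[OF assms, of c x u "ball_pos x k - 1"]
    count_upto_config_of_gaps_before_ball_pos[OF assms, of x] assms
  by auto

lemma new_ball_pos_le: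
  assumes "k \<in> {1..d}"
  shows "new_ball_pos c d x u k \<le> ball_pos x k + 2 * d"
  using new_ball_pos_le_iff_count[OF assms] count_upto_sbbs_step_after_ball_pos[OF assms] by blast

lemma gap_increment_eq:
  assumes "i \<in> {1..<d}"
  shows "int (gaps_of_config d (sbbs_step c (config_of_gaps d x) u) i) - int (x i)
       = (int (new_ball_pos c d x u (Suc i)) - int (ball_pos x (Suc i)))
         - (int (new_ball_pos c d x u i) - int (ball_pos x i))"
proof -
  have "new_ball_pos c d x u i < new_ball_pos c d x u (Suc i)"
    using assms sbbs_step_config_of_gaps_finite_card[of d c x u]
    unfolding new_ball_pos_def by (intro sorted_wrt_nth_less[where P = "(<)"]) auto
  then show ?thesis
    using assms unfolding gaps_of_config_def new_ball_pos_def by (auto simp: Let_def)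
qed

lemma gap_increment_ge:
  assumes "i \<in> {1..<d}"
  shows "- 2 * int d \<le> int (gaps_of_config d (sbbs_step c (config_of_gaps d x) u) i) - int (x i)"
  using ball_pos_le_new_ball_pos[of "Suc i" d x c u] new_ball_pos_le[of i d c x u] assms
  unfolding gap_increment_eq[OF assms] by (simp del: ball_pos.simps)

lemma gap_opens:
  assumes "m \<in> {1..<d}" "x m = 0" "c \<noteq> 0"
    and "\<And>j. j \<in> {1..m} \<Longrightarrow> \<not> u (ball_pos x j)" "u (ball_pos x (Suc m))"
  shows "1 \<le> gaps_of_config d (sbbs_step c (config_of_gaps d x) u) m"
proof -
  let ?G = "carrier c (config_of_gaps d x) u"
  have m: "m \<in> {1..d}" "Suc m \<in> {1..d}" and next_site: "ball_pos x (Suc m) = Suc (ball_pos x m)"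
    using assms(1,2) by auto
  have at_m: "?G (ball_pos x m) = 0"
  proof (rule carrier_stays_zero[of c _ u 0])
    fix t assume "0 < t" "t \<le> ball_pos x m" "config_of_gaps d x t"
    then obtain j where "j \<in> {1..d}" "t = ball_pos x j" by (auto simp: config_of_gaps_def)
    then show "\<not> u t" using assms(4) ball_pos_le_iff[of j m x] \<open>t \<le> ball_pos x m\<close> m by auto
  qed simp_all
  moreover have "?G (ball_pos x (Suc m)) = 1"
    unfolding next_site using at_m assms(3,5) config_of_gaps_ball_pos[OF m(2), of x] next_site
    by (intro carrier_Suc_ball_pickup_from_empty) auto
  ultimately have "new_ball_pos c d x u m \<le> ball_pos x m"
    and "\<not> new_ball_pos c d x u (Suc m) \<le> ball_pos x (Suc m)"
    using new_ball_pos_le_iff[OF m(1)] new_ball_pos_le_iff[OF m(2)]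
      count_upto_config_of_gaps_ball_pos[OF m(1)] count_upto_config_of_gaps_ball_pos[OF m(2)]
    by auto
  then show ?thesis using gap_increment_eq[OF assms(1), of c x u] assms(2) by linarith
qed

lemma config_of_gaps_isolated:
  assumes "\<And>j. j \<in> {1..<m} \<Longrightarrow> 1 \<le> x j" "Suc t \<le> ball_pos x m" "config_of_gaps d x (Suc t)"
  shows "\<not> config_of_gaps d x t"
proof -
  obtain j where j: "j \<in> {1..d}" "Suc t = ball_pos x j"
    using assms(3) by (auto simp: config_of_gaps_def)
  show ?thesis
  proof (cases "j = 1")
    case True
    then show ?thesis using j not_config_of_gaps_0[of d x] by simp
  next
    case False
    then obtain i where i: "j = Suc i" "1 \<le> i" using j by (cases j) auto
    have "1 \<le> m" using assms(2) by (cases m) auto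
    then have "j \<le> m" using j assms(2) ball_pos_le_iff[of j m x] by simp
    then have "1 \<le> x i" using assms(1) i by auto
    then show ?thesis using j i by (intro not_config_of_gaps_between[of i]) auto
  qed
qed

text \<open>Before the first zero gap the balls are isolated, so each carried ball moves exactly one
  site to the right.\<close>
lemma gap_increment_ge_pickups:
  assumes "m \<in> {1..<d}" "\<And>j. j \<in> {1..<m} \<Longrightarrow> 1 \<le> x j" "c \<noteq> 0" "i \<in> {1..<m}"
  shows "of_bool (u (ball_pos x (Suc i))) - of_bool (u (ball_pos x i))
           \<le> int (gaps_of_config d (sbbs_step c (config_of_gaps d x) u) i) - int (x i)"
proof -
  let ?z = "config_of_gaps d x"
  let ?G = "carrier c ?z u"
  have G: "?G t = (if ?z t \<and> u t then 1 else 0)" if "t \<le> ball_pos x m" for t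
    using assms(3) not_config_of_gaps_0 config_of_gaps_isolated[OF assms(2)] that
    by (intro carrier_isolated_balls) auto
  have i: "i \<in> {1..d}" "Suc i \<in> {1..d}" "i \<in> {1..<d}" and xi: "1 \<le> x i" using assms by auto
  have le_m: "ball_pos x (Suc i) \<le> ball_pos x m" using ball_pos_le_iff[of "Suc i" m x] assms(4) by auto
  have next_ball: "ball_pos x (Suc i) = ball_pos x i + x i + 1" using assms(4) by simp
  have left: "int (new_ball_pos c d x u i) - int (ball_pos x i) \<le> of_bool (u (ball_pos x i))"
  proof (cases "u (ball_pos x i)")
    case True
    have "\<not> ?z (ball_pos x i + 1)"
      using next_ball xi assms(4) by (intro not_config_of_gaps_between[of i]) auto
    then have "?G (ball_pos x i + 1) = 0" using G[of "ball_pos x i + 1"] next_ball xi le_m by simp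
    then have "new_ball_pos c d x u i \<le> ball_pos x i + 1"
      using new_ball_pos_le_iff[OF i(1)] count_upto_config_of_gaps_after_ball_pos[of i d x, OF i(3) xi]
      by simp
    then show ?thesis using True by simp
  next
    case False
    then have "?G (ball_pos x i) = 0" using G[of "ball_pos x i"] next_ball le_m by simp
    then have "new_ball_pos c d x u i \<le> ball_pos x i"
      using new_ball_pos_le_iff[OF i(1)] count_upto_config_of_gaps_ball_pos[OF i(1)] by simp
    then show ?thesis using False by simp
  qed
  have right:
    "of_bool (u (ball_pos x (Suc i))) \<le> int (new_ball_pos c d x u (Suc i)) - int (ball_pos x (Suc i))"
  proof (cases "u (ball_pos x (Suc i))")
    case True
    then have "?G (ball_pos x (Suc i)) = 1"
      using G[OF le_m] config_of_gaps_ball_pos[OF i(2), of x] by (simp del: ball_pos.simps)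
    then have "\<not> new_ball_pos c d x u (Suc i) \<le> ball_pos x (Suc i)"
      using new_ball_pos_le_iff[OF i(2)] count_upto_config_of_gaps_ball_pos[OF i(2)] by simp
    then show ?thesis using True by simp
  next
    case False
    then show ?thesis using ball_pos_le_new_ball_pos[OF i(2), of x c u] by simp
  qed
  show ?thesis unfolding gap_increment_eq[OF i(3)] using left right by linarith
qed

lemma gap_shrinks_if_only_pickup:
  assumes "i \<in> {1..<d}" "1 \<le> x i" "c \<noteq> 0"
  shows "int (gaps_of_config d (sbbs_step c (config_of_gaps d x) (\<lambda>s. s = ball_pos x i)) i) - int (x i)
           = -1"
proof -
  let ?u = "\<lambda>s. s = ball_pos x i"
  let ?z = "config_of_gaps d x"
  let ?G = "carrier c ?z ?u"
  let ?p = "ball_pos x i"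
  have i: "i \<in> {1..d}" "Suc i \<in> {1..d}" using assms(1) by auto
  have next_ball: "ball_pos x (Suc i) = ?p + x i + 1" using assms(1) by simp
  have p: "Suc (?p - 1) = ?p" using ball_pos_ge[of i x] i by simp
  have "?G (?p - 1) = 0"
    by (rule carrier_stays_zero[where a = 0 and b = "?p - 1"]) simp_all
  then have at_p: "?G ?p = 1"
    using p assms(3) config_of_gaps_ball_pos[OF i(1), of x]
      carrier_Suc_ball_pickup_from_empty[of ?z "?p - 1" ?u c] by simp
  have "\<not> ?z (Suc ?p)"
    using next_ball assms(2) by (intro not_config_of_gaps_between[of i]) (use i in auto)
  then have after_p_start: "?G (Suc ?p) = 0" using at_p carrier_Suc_empty[of ?z ?p c ?u] by simp
  have after_p: "?G t = 0" if "Suc ?p \<le> t" for t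
  proof (rule carrier_stays_zero[where a = "Suc ?p" and b = t])
    fix s assume "Suc ?p < s"
    then show "\<not> ?u s" by simp
  qed (use that after_p_start in simp_all)
  have at_next_ball: "?G (ball_pos x (Suc i)) = 0"
    using next_ball by (intro after_p) simp
  have "\<not> new_ball_pos c d x ?u i \<le> ?p"
    using new_ball_pos_le_iff[OF i(1)] count_upto_config_of_gaps_ball_pos[OF i(1)] at_p by simp
  moreover have "new_ball_pos c d x ?u i \<le> ?p + 1"
    using new_ball_pos_le_iff[OF i(1)] count_upto_config_of_gaps_after_ball_pos[of i d x, OF assms(1,2)]
      after_p[of "?p + 1"] by simp
  moreover have "new_ball_pos c d x ?u (Suc i) \<le> ball_pos x (Suc i)"
    using new_ball_pos_le_iff[OF i(2), of c x ?u] count_upto_config_of_gaps_ball_pos[OF i(2), of x]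
      at_next_ball by (simp del: ball_pos.simps)
  moreover have "ball_pos x (Suc i) \<le> new_ball_pos c d x ?u (Suc i)"
    using ball_pos_le_new_ball_pos[OF i(2)] .
  ultimately show ?thesis unfolding gap_increment_eq[OF assms(1)] by linarith
qed

section \<open>Drift estimates\<close>

lemma integrable_coins: "integrable (measure_pmf (coins eps d x)) (f :: _ \<Rightarrow> real)"
  unfolding coins_def
  by (intro integrable_measure_pmf_finite finite_subset[OF set_Pi_pmf_subset'])
     (auto intro!: finite_PiE_dflt)

lemma drift_eq_expectation_coins:
  "drift eps c d x i = measure_pmf.expectation (coins eps d x)
     (\<lambda>u. real_of_int (int (gaps_of_config d (sbbs_step c (config_of_gaps d x) u) i) - int (x i)))"
  unfolding drift_def increment_law_def by simp

lemma expectation_coin: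
  assumes "s \<in> {1..ball_pos x d}" "0 \<le> eps" "eps \<le> 1"
  shows "measure_pmf.expectation (coins eps d x) (\<lambda>u. of_bool (u s)) = 1 - eps"
proof -
  have "map_pmf (\<lambda>u. u s) (coins eps d x) = bernoulli_pmf (1 - eps)"
    unfolding coins_def using assms by (subst Pi_pmf_component) auto
  then have "measure_pmf.expectation (coins eps d x) (\<lambda>u. of_bool (u s))
      = measure_pmf.expectation (bernoulli_pmf (1 - eps)) (\<lambda>b. of_bool b :: real)"
    by (metis integral_map_pmf)
  then show ?thesis using assms by simp
qed

lemma prob_coins_event:
  assumes "Z \<subseteq> {1..ball_pos x d}" "s \<in> {1..ball_pos x d} - Z" "0 \<le> eps" "eps \<le> 1"
  shows "measure_pmf.prob (coins eps d x) {u. (\<forall>z\<in>Z. \<not> u z) \<and> u s} = eps ^ card Z * (1 - eps)"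
proof -
  let ?A = "{1..ball_pos x d}"
  define B where "B a = (if a \<in> Z then {False} else if a = s then {True} else UNIV)" for a
  have "{u. (\<forall>z\<in>Z. \<not> u z) \<and> u s} = Pi ?A B"
  proof (intro set_eqI iffI)
    fix u assume "u \<in> Pi ?A B"
    then have "u a \<in> B a" if "a \<in> ?A" for a using that by blast
    then show "u \<in> {u. (\<forall>z\<in>Z. \<not> u z) \<and> u s}"
      using assms(1,2) unfolding B_def by (fastforce split: if_splits)
  qed (use assms(2) in \<open>auto simp: B_def\<close>)
  then have "measure_pmf.prob (coins eps d x) {u. (\<forall>z\<in>Z. \<not> u z) \<and> u s}
      = (\<Prod>a\<in>?A. measure_pmf.prob (bernoulli_pmf (1 - eps)) (B a))"
    unfolding coins_def by (simp add: measure_Pi_pmf_Pi)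
  also have "\<dots> = (\<Prod>a\<in>?A. if a \<in> Z then eps else if a = s then 1 - eps else 1)"
    using assms(3,4) unfolding B_def by (intro prod.cong) (auto simp: measure_pmf_single)
  also have "\<dots> = eps ^ card (?A \<inter> Z) * (1 - eps)"
    using assms(2) by (simp add: prod.If_cases Int_absorb1 prod.delta)
  finally show ?thesis using assms(1) by (simp add: Int_absorb1)
qed

lemma drift_ge:
  assumes "i \<in> {1..<d}"
  shows "- 2 * real d \<le> drift eps c d x i"
  unfolding drift_eq_expectation_coins
proof (intro measure_pmf.integral_ge_const[OF integrable_coins] AE_I2)
  fix u
  have "- 2 * int d \<le> int (gaps_of_config d (sbbs_step c (config_of_gaps d x) u) i) - int (x i)"
    by (rule gap_increment_ge[OF assms])
  then show "- 2 * real d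
      \<le> real_of_int (int (gaps_of_config d (sbbs_step c (config_of_gaps d x) u) i) - int (x i))"
    by linarith
qed

lemma drift_ge_at_zero_gap:
  assumes "m \<in> {1..<d}" "x m = 0" "c \<noteq> 0" "0 \<le> eps" "eps \<le> 1"
  shows "eps ^ m * (1 - eps) \<le> drift eps c d x m"
proof -
  let ?Z = "ball_pos x ` {1..m}" and ?s = "ball_pos x (Suc m)"
  let ?E = "{u. (\<forall>z\<in>?Z. \<not> u z) \<and> u ?s}"
  let ?inc = "\<lambda>u. real_of_int (int (gaps_of_config d (sbbs_step c (config_of_gaps d x) u) m) - int (x m))"
  have ball_in: "ball_pos x j \<in> {1..ball_pos x d}" if "j \<in> {1..d}" for j
    using that ball_pos_ge[of j x] ball_pos_le_iff[of j d x] by auto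
  have "card ?Z = m" by (subst card_image) (auto simp: inj_on_def ball_pos_eq_iff)
  moreover have "?Z \<subseteq> {1..ball_pos x d}" using assms(1) ball_in by auto
  moreover have "?s \<notin> ?Z"
  proof
    assume "?s \<in> ?Z"
    then obtain j where "j \<in> {1..m}" "?s = ball_pos x j" by blast
    then show False using ball_pos_strict_mono[of j "Suc m" x] by (simp del: ball_pos.simps)
  qed
  then have "?s \<in> {1..ball_pos x d} - ?Z" using assms(1) ball_in[of "Suc m"] by simp
  ultimately have "eps ^ m * (1 - eps) = measure_pmf.prob (coins eps d x) ?E"
    using prob_coins_event[of ?Z x d ?s eps] assms(4,5) by simp
  also have "\<dots> = measure_pmf.expectation (coins eps d x) (indicator ?E)"
    by simp
  also have "\<dots> \<le> measure_pmf.expectation (coins eps d x) ?inc"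
  proof (rule integral_mono[OF integrable_coins integrable_coins])
    fix u
    show "indicator ?E u \<le> ?inc u"
      using gap_opens[of m d x c u, OF assms(1-3)] assms(2) by (auto simp: indicator_def)
  qed
  finally show ?thesis unfolding drift_eq_expectation_coins .
qed

lemma drift_nonneg_before_first_zero:
  assumes "m \<in> {1..<d}" "\<And>j. j \<in> {1..<m} \<Longrightarrow> 1 \<le> x j" "c \<noteq> 0" "i \<in> {1..<m}"
    and "0 \<le> eps" "eps \<le> 1"
  shows "0 \<le> drift eps c d x i"
proof -
  let ?coin = "\<lambda>j u. of_bool (u (ball_pos x j)) :: real"
  let ?inc = "\<lambda>u. real_of_int (int (gaps_of_config d (sbbs_step c (config_of_gaps d x) u) i) - int (x i))"
  have ball_in: "ball_pos x j \<in> {1..ball_pos x d}" if "j \<in> {1..d}" for j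
    using that ball_pos_ge[of j x] ball_pos_le_iff[of j d x] by auto
  have "i \<in> {1..d}" "Suc i \<in> {1..d}" using assms(1,4) by auto
  then have "0 = measure_pmf.expectation (coins eps d x) (?coin (Suc i))
              - measure_pmf.expectation (coins eps d x) (?coin i)"
    using expectation_coin[OF ball_in] assms(5,6) by (simp del: ball_pos.simps)
  also have "\<dots> = measure_pmf.expectation (coins eps d x) (\<lambda>u. ?coin (Suc i) u - ?coin i u)"
    by (rule Bochner_Integration.integral_diff[symmetric, OF integrable_coins integrable_coins])
  also have "\<dots> \<le> measure_pmf.expectation (coins eps d x) ?inc"
  proof (rule integral_mono[OF integrable_coins integrable_coins])
    fix u
    show "?coin (Suc i) u - ?coin i u \<le> ?inc u"
      using gap_increment_ge_pickups[of m d x c i u, OF assms(1-4)]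
      by (simp add: of_bool_def split: if_splits)
  qed
  finally show ?thesis unfolding drift_eq_expectation_coins .
qed

section \<open>The boundary cells\<close>

lemma increment_law_nonneg_at_zero_gap:
  assumes "x i = 0" "v \<in> set_pmf (increment_law eps c d x)"
  shows "0 \<le> v i"
  using assms unfolding increment_law_def by auto

lemma increment_law_neg_at_positive_gap:
  assumes "i \<in> {1..<d}" "1 \<le> x i" "c \<noteq> 0" "0 < eps" "eps < 1"
  shows "\<exists>v\<in>set_pmf (increment_law eps c d x). v i < 0"
proof -
  let ?u = "\<lambda>s. s = ball_pos x i"
  have "ball_pos x i \<in> {1..ball_pos x d}"
    using assms(1) ball_pos_ge[of i x] ball_pos_le_iff[of i d x] by auto
  then have "?u \<in> set_pmf (coins eps d x)"
    unfolding coins_def using assms(4,5) by (subst set_Pi_pmf) (auto simp: PiE_dflt_def)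
  then show ?thesis
    unfolding increment_law_def set_map_pmf
    using gap_shrinks_if_only_pickup[of i d x c, OF assms(1-3)] by force
qed

definition first_zero_gap :: "nat \<Rightarrow> (nat \<Rightarrow> nat) \<Rightarrow> nat" where
  "first_zero_gap d x = (LEAST i. i \<in> {1..d-1} \<and> x i = 0)"

lemma first_zero_gap:
  assumes "x \<in> boundary d"
  shows "first_zero_gap d x \<in> {1..d-1}" "x (first_zero_gap d x) = 0"
    and "\<And>j. j \<in> {1..d-1} \<Longrightarrow> j < first_zero_gap d x \<Longrightarrow> 1 \<le> x j"
proof -
  let ?P = "\<lambda>i. i \<in> {1..d-1} \<and> x i = 0"
  obtain i where "?P i" using assms unfolding boundary_def by blast
  then have "?P (first_zero_gap d x)" unfolding first_zero_gap_def by (rule LeastI)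
  then show "first_zero_gap d x \<in> {1..d-1}" "x (first_zero_gap d x) = 0" by auto
  show "1 \<le> x j" if "j \<in> {1..d-1}" "j < first_zero_gap d x" for j
  proof -
    have "\<not> ?P j" using not_less_Least[of j ?P] that(2) unfolding first_zero_gap_def by blast
    then show ?thesis using that(1) by simp
  qed
qed

lemma first_zero_gap_eq_if_same_increment_law:
  assumes "x \<in> boundary d" "y \<in> boundary d"
    and "increment_law eps c d x = increment_law eps c d y"
    and "c \<noteq> 0" "0 < eps" "eps < 1"
  shows "first_zero_gap d x = first_zero_gap d y"
proof -
  have not_less: "\<not> first_zero_gap d y < first_zero_gap d x"
    if x: "x \<in> boundary d" and y: "y \<in> boundary d"
      and law: "increment_law eps c d x = increment_law eps c d y" for x y
  proof
    let ?j = "first_zero_gap d y"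
    assume less: "?j < first_zero_gap d x"
    have j: "?j \<in> {1..<d}" "y ?j = 0" using first_zero_gap[OF y] by auto
    then have "1 \<le> x ?j" using first_zero_gap(3)[OF x _ less] by auto
    then obtain v where v: "v \<in> set_pmf (increment_law eps c d y)" "v ?j < 0"
      using increment_law_neg_at_positive_gap[of ?j d x, OF j(1) _ assms(4-6)] law by auto
    with increment_law_nonneg_at_zero_gap[OF j(2) v(1)] show False by simp
  qed
  show ?thesis using not_less[OF assms(1-3)] not_less[OF assms(2,1) assms(3)[symmetric]] by simp
qed

lemma cell_representative:
  assumes "p \<in> cells eps0 d"
  shows "(SOME x. x \<in> p) \<in> p" and "p \<subseteq> boundary d"
    and "\<And>x y. x \<in> p \<Longrightarrow> y \<in> p \<Longrightarrow> increment_law eps0 \<infinity> d x = increment_law eps0 \<infinity> d y"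
proof -
  obtain a where "a \<in> boundary d"
    and p: "p = {y. y \<in> boundary d \<and> increment_law eps0 \<infinity> d a = increment_law eps0 \<infinity> d y}"
    using assms unfolding cells_def by (auto elim!: quotientE)
  then have "a \<in> p" by simp
  then show "(SOME x. x \<in> p) \<in> p" by (rule someI[of "\<lambda>x. x \<in> p"])
  show "p \<subseteq> boundary d" using p by auto
  show "increment_law eps0 \<infinity> d x = increment_law eps0 \<infinity> d y" if "x \<in> p" "y \<in> p" for x y
    using that p by auto
qed

lemma first_zero_gap_in_cell_f:
  assumes "p \<in> cells eps0 d" "x \<in> p" "0 < eps0" "eps0 < 1"
  shows "first_zero_gap d x \<in> cell_f d p"
proof -
  let ?m = "first_zero_gap d x"
  have x: "x \<in> boundary d" using cell_representative(2)[OF assms(1)] assms(2) by blast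
  have "y ?m = 0" if "y \<in> p" for y
  proof -
    have y: "y \<in> boundary d" using cell_representative(2)[OF assms(1)] that by blast
    have "?m = first_zero_gap d y"
      using first_zero_gap_eq_if_same_increment_law[OF x y cell_representative(3)[OF assms(1,2) that]]
        assms(3,4) by simp
    then show ?thesis using first_zero_gap(2)[OF y] by simp
  qed
  then have "bdd_above ((\<lambda>y. y ?m) ` p)" by (intro bdd_aboveI[of _ 0]) auto
  then show ?thesis unfolding cell_f_def using first_zero_gap(1)[OF x] by simp
qed

section \<open>Weakly completely-S matrices\<close>

lemma geometric_weighted_sum_ge:
  fixes R :: "nat \<Rightarrow> real"
  assumes "finite I" "m \<in> I" "card I \<le> n"
    and "\<delta> \<le> R m" "\<And>i. i \<in> I \<Longrightarrow> i < m \<Longrightarrow> 0 \<le> R i" "\<And>i. i \<in> I \<Longrightarrow> - B \<le> R i"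
    and "0 \<le> t" "t \<le> 1" "0 \<le> B" "real n * B * t \<le> \<delta> / 2"
  shows "t ^ m * \<delta> / 2 \<le> (\<Sum>i\<in>I. t ^ i * R i)"
proof -
  have other: "- (t ^ Suc m * B) \<le> t ^ i * R i" if "i \<in> I - {m}" for i
  proof (cases "i < m")
    case True
    then have "0 \<le> t ^ i * R i" using assms(5,7) that by simp
    moreover have "0 \<le> t ^ Suc m * B" using assms(7,9) by simp
    ultimately show ?thesis by linarith
  next
    case False
    then have "t ^ i \<le> t ^ Suc m" using that assms(7,8) by (intro power_decreasing) auto
    then have "- (t ^ Suc m * B) \<le> t ^ i * (- B)" using assms(9) by (simp add: mult_right_mono)
    also have "\<dots> \<le> t ^ i * R i" using assms(6,7) that by (intro mult_left_mono) auto
    finally show ?thesis .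
  qed
  have "card (I - {m}) \<le> n" using assms(1,3) by (meson card_Diff1_le le_trans)
  then have "- (real n * (t ^ Suc m * B)) \<le> - (real (card (I - {m})) * (t ^ Suc m * B))"
    using assms(7,9) by (intro le_imp_neg_le mult_right_mono) auto
  also have "\<dots> \<le> (\<Sum>i\<in>I - {m}. t ^ i * R i)"
    using sum_mono[of "I - {m}" "\<lambda>_. - (t ^ Suc m * B)", OF other] by simp
  finally have "- (t ^ m * (real n * B * t)) \<le> (\<Sum>i\<in>I - {m}. t ^ i * R i)"
    by (simp add: algebra_simps)
  moreover have "t ^ m * (real n * B * t) \<le> t ^ m * (\<delta> / 2)"
    using assms(7,10) by (intro mult_left_mono) auto
  moreover have "t ^ m * \<delta> \<le> t ^ m * R m" using assms(4,7) by (intro mult_left_mono) auto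
  ultimately show ?thesis
    using sum.remove[OF assms(1,2), of "\<lambda>i. t ^ i * R i"] by simp
qed

lemma weakly_completely_S_if_leading_entries:
  assumes "0 < \<delta>" "0 \<le> B"
    and "\<And>j. j \<in> J \<Longrightarrow> \<exists>m\<in>f j. m \<in> {1..n} \<and> \<delta> \<le> R m j
           \<and> (\<forall>i\<in>{1..<m}. 0 \<le> R i j) \<and> (\<forall>i\<in>{1..n}. - B \<le> R i j)"
  shows "weakly_completely_S n J R f"
proof -
  define t where "t = \<delta> / (2 * (real n * B + \<delta>))"
  have nB: "0 \<le> real n * B" using assms(2) by simp
  then have den: "0 < real n * B + \<delta>" using assms(1) by linarith
  have t: "0 < t" "t \<le> 1" using assms(1) nB den by (simp_all add: t_def)
  have "real n * B / (real n * B + \<delta>) \<le> 1" using assms(1) nB den by simp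
  moreover have "real n * B * t = \<delta> / 2 * (real n * B / (real n * B + \<delta>))"
    using den by (simp add: t_def field_simps)
  ultimately have nBt: "real n * B * t \<le> \<delta> / 2"
    using assms(1) by (metis half_gt_zero_iff less_eq_real_def mult.right_neutral mult_left_mono)
  define lam where "lam i = 2 / (\<delta> * t ^ n) * t ^ i" for i
  have "1 \<le> (\<Sum>i\<in>I. lam i * R i j)" if I: "I \<subseteq> {1..n}" and j: "j \<in> J" "f j \<subseteq> I" for I j
  proof -
    obtain m where m: "m \<in> f j" "m \<in> {1..n}" "\<delta> \<le> R m j"
      "\<forall>i\<in>{1..<m}. 0 \<le> R i j" "\<forall>i\<in>{1..n}. - B \<le> R i j"
      using assms(3)[OF j(1)] by blast
    have "finite I" "card I \<le> n" using I finite_subset card_mono[of "{1..n}" I] by auto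
    then have "t ^ m * \<delta> / 2 \<le> (\<Sum>i\<in>I. t ^ i * R i j)"
      using m I j(2) t nBt assms(2)
      by (intro geometric_weighted_sum_ge[where B = B and n = n]) auto
    moreover have "t ^ n \<le> t ^ m" using m(2) t by (intro power_decreasing) auto
    then have "t ^ n * \<delta> / 2 \<le> t ^ m * \<delta> / 2"
      using assms(1) by (intro divide_right_mono mult_right_mono) auto
    ultimately have "t ^ n * \<delta> / 2 \<le> (\<Sum>i\<in>I. t ^ i * R i j)" by linarith
    then have "2 / (\<delta> * t ^ n) * (t ^ n * \<delta> / 2) \<le> 2 / (\<delta> * t ^ n) * (\<Sum>i\<in>I. t ^ i * R i j)"
      using assms(1) t(1) by (intro mult_left_mono) auto
    moreover have "(\<Sum>i\<in>I. lam i * R i j) = 2 / (\<delta> * t ^ n) * (\<Sum>i\<in>I. t ^ i * R i j)"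
      by (simp add: lam_def sum_distrib_left mult.assoc)
    ultimately show ?thesis using assms(1) t(1) by simp
  qed
  moreover have "0 < lam i" for i using assms(1) t(1) by (simp add: lam_def)
  ultimately show ?thesis unfolding weakly_completely_S_def by blast
qed

theorem lemma6p4:
  fixes d :: nat and eps eps0 :: real and c :: enat
  assumes "d \<ge> 2"
    and "0 < eps" and "eps < 1"
    and "c \<noteq> 0"
    and "0 < eps0" and "eps0 < 1"
  shows "weakly_completely_S (d - 1) (cells eps0 d)
           (\<lambda>i p. cell_drift eps c d p i) (cell_f d)"
proof (rule weakly_completely_S_if_leading_entries)
  show "0 < eps ^ (d - 1) * (1 - eps)" using assms(2,3) by simp
  show "0 \<le> 2 * real d" by simp
  fix p assume p: "p \<in> cells eps0 d"
  define x where "x = (SOME x. x \<in> p)"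
  have x: "x \<in> p" "x \<in> boundary d" using cell_representative(1,2)[OF p] unfolding x_def by auto
  define m where "m = first_zero_gap d x"
  have m: "m \<in> {1..<d}" "x m = 0" "\<And>j. j \<in> {1..<m} \<Longrightarrow> 1 \<le> x j"
    using first_zero_gap[OF x(2)] assms(1) unfolding m_def by auto
  have "eps ^ (d - 1) * (1 - eps) \<le> eps ^ m * (1 - eps)"
    using m(1) assms(2,3) by (intro mult_right_mono power_decreasing) auto
  also have "\<dots> \<le> drift eps c d x m"
    using drift_ge_at_zero_gap[of m d x c eps, OF m(1,2) assms(4)] assms(2,3) by simp
  finally have leading: "eps ^ (d - 1) * (1 - eps) \<le> drift eps c d x m" .
  have above: "\<forall>i\<in>{1..<m}. 0 \<le> drift eps c d x i"
    using drift_nonneg_before_first_zero[of m d x c _ eps, OF m(1) m(3) assms(4)] assms(2,3) by auto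
  have bounded: "\<forall>i\<in>{1..d - 1}. - (2 * real d) \<le> drift eps c d x i"
    using drift_ge[of _ d eps c x] by auto
  have "m \<in> cell_f d p" unfolding m_def using first_zero_gap_in_cell_f[OF p x(1) assms(5,6)] .
  then show "\<exists>m\<in>cell_f d p. m \<in> {1..d - 1} \<and> eps ^ (d - 1) * (1 - eps) \<le> cell_drift eps c d p m
      \<and> (\<forall>i\<in>{1..<m}. 0 \<le> cell_drift eps c d p i)
      \<and> (\<forall>i\<in>{1..d - 1}. - (2 * real d) \<le> cell_drift eps c d p i)"
    unfolding cell_drift_def x_def[symmetric] using m(1) leading above bounded by auto
qed

end
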